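(* Let $\star$ be a semistar operation on an integral domain $D$. Then $D^{[\star]}$ is $t$-linked to $(D,\star)$. If moreover $(D:_K D^\star)\ne(0)$, then the complete integral closure $\widetilde D$ of $D$ is $t$-linked to $(D,\star)$. In particular, the complete integral closure $\widetilde D$ of $D$ is always $t$-linked to $D$.
   Context: Let $D$ be an integral domain with quotient field $K$. $\overline{\mathbf F}(D)$ denotes the set of all nonzero $D$-submodules of $K$ and $\mathbf f(D)$ the set of nonzero finitely generated $D$-submodules of $K$. A semistar operation on $D$ is a map $\star:\overline{\mathbf F}(D)\to\overline{\mathbf F}(D)$, $E\mapsto E^\star$, such that for all $0\ne x\in K$ and $E,F\in\overline{\mathbf F}(D)$: (1) $(xE)^\star=xE^\star$; (2) $E\subseteq F\Rightarrow E^\star\subseteq F^\star$; (3) $E\subseteq E^\star$ and $(E^\star)^\star=E^\star$. $\star_f$ is defined by $E^{\star_f}=\bigcup\{F^\star:F\in\mathbf f(D),F\subseteq E\}$. $D^{[\star]}:=\bigcup\{(H^\star:_KH^\star): H\in\mathbf f(D)\}$ (an overring of $D$). The complete integral closure of $D$ is $\widetilde D=\bigcup\{(E:_KE): E$ a nonzero fractional ideal of $D\}$. For an overring $T$ of $D$ (a ring with $D\subseteq T\subseteq K$), $v_T$ is the semistar operation $E\mapsto (T:_K(T:_KE))$ on $T$ and $t_T:=(v_T)_f$. If $\star'$ is a semistar operation on $T$, $T$ is $(\star,\star')$-linked to $D$ if for every nonzero finitely generated ideal $F\subseteq D$ with $F^\star=D^\star$ one has $(FT)^{\star'}=T^{\star'}$.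 $T$ is $t$-linked to $(D,\star)$ if it is $(\star,t_T)$-linked to $D$, and $t$-linked to $D$ if it is $(t_D,t_T)$-linked to $D$. *)

theory Defs
  imports Main
begin

text \<open>Throughout, the quotient field K is the ambient field type 'k, and an
integral domain D is a subring of 'k whose fraction field is all of 'k.\<close>

definition subring :: "'k::field set \<Rightarrow> bool" where
  "subring R \<longleftrightarrow> 0 \<in> R \<and> 1 \<in> R \<and> (\<forall>x\<in>R. \<forall>y\<in>R. x + y \<in> R \<and> x - y \<in> R \<and> x * y \<in> R)"

definition quotient_field_is_UNIV :: "'k::field set \<Rightarrow> bool" where
  "quotient_field_is_UNIV D \<longleftrightarrow> (\<forall>x. \<exists>a\<in>D. \<exists>b\<in>D. b \<noteq> 0 \<and> x = a / b)"

definition submod :: "'k::field set \<Rightarrow> 'k set \<Rightarrow> bool" where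
  "submod R E \<longleftrightarrow> 0 \<in> E \<and> (\<forall>x\<in>E. \<forall>y\<in>E. x + y \<in> E) \<and> (\<forall>r\<in>R. \<forall>x\<in>E. r * x \<in> E)"

definition Fbar :: "'k::field set \<Rightarrow> 'k set set" where
  "Fbar R = {E. submod R E \<and> E \<noteq> {0}}"

definition rspan :: "'k::field set \<Rightarrow> 'k set \<Rightarrow> 'k set" where
  "rspan R S = {\<Sum>s\<in>S. a s * s | a. \<forall>s\<in>S. a s \<in> R}"

definition fgs :: "'k::field set \<Rightarrow> 'k set set" where
  "fgs R = {E. (\<exists>S. finite S \<and> E = rspan R S) \<and> E \<noteq> {0}}"

definition smul :: "'k::field \<Rightarrow> 'k set \<Rightarrow> 'k set" where
  "smul x E = (\<lambda>e. x * e) ` E"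

definition semistar :: "'k::field set \<Rightarrow> ('k set \<Rightarrow> 'k set) \<Rightarrow> bool" where
  "semistar R st \<longleftrightarrow>
     (\<forall>E\<in>Fbar R. st E \<in> Fbar R) \<and>
     (\<forall>x E. x \<noteq> 0 \<longrightarrow> E \<in> Fbar R \<longrightarrow> st (smul x E) = smul x (st E)) \<and>
     (\<forall>E\<in>Fbar R. \<forall>F\<in>Fbar R. E \<subseteq> F \<longrightarrow> st E \<subseteq> st F) \<and>
     (\<forall>E\<in>Fbar R. E \<subseteq> st E \<and> st (st E) = st E)"

definition colon :: "'k::field set \<Rightarrow> 'k set \<Rightarrow> 'k set" where
  "colon E F = {x. \<forall>f\<in>F. x * f \<in> E}"

definition finite_type :: "'k::field set \<Rightarrow> ('k set \<Rightarrow> 'k set) \<Rightarrow> 'k set \<Rightarrow> 'k set" where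
  "finite_type R st E = \<Union>{st F | F. F \<in> fgs R \<and> F \<subseteq> E}"

definition Dbracket :: "'k::field set \<Rightarrow> ('k set \<Rightarrow> 'k set) \<Rightarrow> 'k set" where
  "Dbracket D st = \<Union>{colon (st H) (st H) | H. H \<in> fgs D}"

definition fractional_ideal :: "'k::field set \<Rightarrow> 'k set \<Rightarrow> bool" where
  "fractional_ideal D E \<longleftrightarrow> E \<in> Fbar D \<and> (\<exists>d\<in>D. d \<noteq> 0 \<and> (\<forall>e\<in>E. d * e \<in> D))"

definition cic :: "'k::field set \<Rightarrow> 'k set" where
  "cic D = \<Union>{colon E E | E. fractional_ideal D E}"

definition v_op :: "'k::field set \<Rightarrow> 'k set \<Rightarrow> 'k set" where
  "v_op T E = colon T (colon T E)"

definition t_op :: "'k::field set \<Rightarrow> 'k set \<Rightarrow> 'k set" where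
  "t_op T = finite_type T (v_op T)"

definition prod_ext :: "'k::field set \<Rightarrow> 'k set \<Rightarrow> 'k set" where
  "prod_ext F T = {\<Sum>i<n. f i * t i | (n::nat) f t. \<forall>i<n. f i \<in> F \<and> t i \<in> T}"

definition linked :: "'k::field set \<Rightarrow> ('k set \<Rightarrow> 'k set) \<Rightarrow> 'k set \<Rightarrow> ('k set \<Rightarrow> 'k set) \<Rightarrow> bool" where
  "linked D st T st' \<longleftrightarrow>
     (\<forall>F. F \<in> fgs D \<and> F \<subseteq> D \<and> st F = st D \<longrightarrow> st' (prod_ext F T) = st' T)"

definition t_linked_star :: "'k::field set \<Rightarrow> ('k set \<Rightarrow> 'k set) \<Rightarrow> 'k set \<Rightarrow> bool" where
  "t_linked_star D st T \<longleftrightarrow> linked D st T (t_op T)"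

definition t_linked :: "'k::field set \<Rightarrow> 'k set \<Rightarrow> bool" where
  "t_linked D T \<longleftrightarrow> linked D (t_op D) T (t_op T)"

end

theory Submission
  imports Defs "HOL.Hull"
begin

(* Let F = (S) be finitely generated with F^st = D^st. Multiplying by F is invisible to st:
   1 \<in> F^st gives H \<subseteq> (FH)^st, hence (H^st : FH) \<subseteq> (H^st : H^st) for every H.
   Both D^[st] and the complete integral closure are directed unions T of rings (X : X), with X
   ranging over a family of D-submodules closed under st (for the complete integral closure this
   is where (D : D^st) \<noteq> 0 keeps E^st fractional). If yS \<subseteq> T, then by directedness
   yS \<subseteq> (X : X) for one X, so y \<in> (X^st : FX) \<subseteq> (X^st : X^st) \<subseteq> T. Thus (T : S) \<subseteq> T, and since FT
   is spanned over T by the finite set S, (FT)^{v_T} = T and hence (FT)^{t_T} = T.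
   The last claim is the case st = v: (D : D^v) = D, and F^t = D implies F^v = D. *)

section \<open>Submodules and colons\<close>

lemma submod_sum:
  assumes "submod R M" "finite A" "\<forall>i\<in>A. g i \<in> M"
  shows "sum g A \<in> M"
  using assms(2,3) by (induction A rule: finite_induct) (use assms(1) in \<open>auto simp: submod_def\<close>)

lemma subring_submod: "subring R \<Longrightarrow> submod R R"
  unfolding subring_def submod_def by auto

lemma submod_diff:
  assumes "subring R" "submod R X" "a \<in> X" "b \<in> X"
  shows "a - b \<in> X"
proof -
  have "0 - 1 \<in> R" using assms(1) unfolding subring_def by blast
  then have "a + (0 - 1) * b \<in> X" using assms(2-4) unfolding submod_def by blast
  then show ?thesis by simp
qed

lemma Fbar_submod: "E \<in> Fbar R \<Longrightarrow> submod R E"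
  unfolding Fbar_def by blast

lemma Fbar_nonzero: "E \<in> Fbar R \<Longrightarrow> \<exists>e\<in>E. e \<noteq> 0"
  unfolding Fbar_def submod_def by auto

lemma self_in_Fbar: "subring R \<Longrightarrow> R \<in> Fbar R"
  using subring_submod[of R] unfolding Fbar_def subring_def by auto

lemma smul_Fbar:
  assumes "x \<noteq> 0" "E \<in> Fbar R"
  shows "smul x E \<in> Fbar R"
proof -
  have "submod R (smul x E)"
    using Fbar_submod[OF assms(2)] unfolding submod_def smul_def
    by (auto simp: image_iff mult.left_commute simp flip: distrib_left)
  moreover have "smul x E \<noteq> {0}"
    using Fbar_nonzero[OF assms(2)] assms(1) unfolding smul_def by (metis imageI mult_eq_0_iff singletonD)
  ultimately show ?thesis unfolding Fbar_def by blast
qed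

lemma colon_antimono: "X \<subseteq> Y \<Longrightarrow> colon Z Y \<subseteq> colon Z X"
  unfolding colon_def by blast

lemma colon_mono: "Z \<subseteq> Z' \<Longrightarrow> colon Z X \<subseteq> colon Z' X"
  unfolding colon_def by blast

lemma submod_colon: "submod R Z \<Longrightarrow> submod R (colon Z X)"
  unfolding submod_def colon_def by (auto simp: distrib_right mult.assoc)

lemma subring_colon_self:
  assumes "subring R" "submod R X"
  shows "subring (colon X X)" and "R \<subseteq> colon X X"
  using assms(2) submod_diff[OF assms] unfolding subring_def colon_def submod_def
  by (auto simp: distrib_right left_diff_distrib mult.assoc)

lemma colon_subring_eq:
  assumes "subring R"
  shows "colon R R = R"
proof
  show "colon R R \<subseteq> R"
    using assms unfolding subring_def colon_def by (metis (mono_tags, lifting) mem_Collect_eq mult.right_neutral subsetI)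
  show "R \<subseteq> colon R R"
    using assms unfolding subring_def colon_def by blast
qed

lemma subset_colon_colon: "X \<subseteq> colon Z (colon Z X)"
  unfolding colon_def by (auto simp: mult.commute)

lemma colon_colon_colon: "colon Z (colon Z (colon Z X)) = colon Z X"
  using subset_colon_colon colon_antimono[OF subset_colon_colon] by blast

lemma colon_smul:
  assumes "x \<noteq> 0"
  shows "colon Z (smul x E) = smul (inverse x) (colon Z E)"
proof
  show "colon Z (smul x E) \<subseteq> smul (inverse x) (colon Z E)"
  proof
    fix y assume "y \<in> colon Z (smul x E)"
    then have "x * y \<in> colon Z E" unfolding colon_def smul_def by (auto simp: ac_simps)
    then show "y \<in> smul (inverse x) (colon Z E)"
      unfolding smul_def using assms by (auto intro!: image_eqI[of _ _ "x * y"])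
  qed
  show "smul (inverse x) (colon Z E) \<subseteq> colon Z (smul x E)"
    unfolding smul_def colon_def using assms by (auto simp: ac_simps)
qed

lemma colon_hull:
  assumes "submod R Z"
  shows "colon Z (submod R hull A) = colon Z A"
proof
  show "colon Z (submod R hull A) \<subseteq> colon Z A"
    by (rule colon_antimono) (rule hull_subset)
  show "colon Z A \<subseteq> colon Z (submod R hull A)"
  proof
    fix x assume x: "x \<in> colon Z A"
    have "submod R {z. x * z \<in> Z}"
      using assms unfolding submod_def by (auto simp: distrib_left mult.left_commute)
    then have "submod R hull A \<subseteq> {z. x * z \<in> Z}"
      using x unfolding colon_def by (intro hull_minimal) auto
    then show "x \<in> colon Z (submod R hull A)"
      unfolding colon_def by blast
  qed
qed

lemma submod_hull: "submod R (submod R hull A)"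
  by (rule hull_in) (simp add: submod_def)

lemma hull_in_Fbar_iff: "submod R hull A \<in> Fbar R \<longleftrightarrow> (\<exists>a\<in>A. a \<noteq> 0)"
proof
  assume hull: "submod R hull A \<in> Fbar R"
  show "\<exists>a\<in>A. a \<noteq> 0"
  proof (rule ccontr)
    assume "\<not> (\<exists>a\<in>A. a \<noteq> 0)"
    then have "A \<subseteq> {0}" by blast
    moreover have "submod R {0}" by (simp add: submod_def)
    ultimately have "submod R hull A \<subseteq> {0}" by (rule hull_minimal)
    with Fbar_nonzero[OF hull] show False by blast
  qed
next
  assume "\<exists>a\<in>A. a \<noteq> 0"
  then have "submod R hull A \<noteq> {0}"
    using hull_subset[of A] by blast
  then show "submod R hull A \<in> Fbar R"
    unfolding Fbar_def using submod_hull by blast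
qed

lemma rspan_submod:
  assumes "subring R"
  shows "submod R (rspan R S)"
  unfolding submod_def
proof (intro conjI ballI)
  show "0 \<in> rspan R S"
    unfolding rspan_def using assms unfolding subring_def
    by (auto intro!: exI[of _ "\<lambda>_. 0"])
next
  fix x y assume "x \<in> rspan R S" "y \<in> rspan R S"
  then obtain a b where "x = (\<Sum>s\<in>S. a s * s)" "y = (\<Sum>s\<in>S. b s * s)"
    and "\<forall>s\<in>S. a s \<in> R" "\<forall>s\<in>S. b s \<in> R"
    unfolding rspan_def by blast
  then show "x + y \<in> rspan R S"
    unfolding rspan_def using assms unfolding subring_def
    by (auto simp: sum.distrib distrib_right intro!: exI[of _ "\<lambda>s. a s + b s"])
next
  fix r x assume "r \<in> R" "x \<in> rspan R S"
  moreover obtain a where "x = (\<Sum>s\<in>S. a s * s)" "\<forall>s\<in>S. a s \<in> R"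
    using \<open>x \<in> rspan R S\<close> unfolding rspan_def by blast
  ultimately show "r * x \<in> rspan R S"
    unfolding rspan_def using assms unfolding subring_def
    by (auto simp: sum_distrib_left mult.assoc intro!: exI[of _ "\<lambda>s. r * a s"])
qed

lemma rspan_superset:
  assumes "subring R" "finite S"
  shows "S \<subseteq> rspan R S"
proof
  fix s assume "s \<in> S"
  have "(\<Sum>x\<in>S. (if x = s then 1 else 0) * x) = (\<Sum>x\<in>S. if x = s then x else 0)"
    by (rule sum.cong) auto
  also have "\<dots> = s"
    using assms(2) \<open>s \<in> S\<close> by simp
  finally have "(\<Sum>x\<in>S. (if x = s then 1 else 0) * x) = s" .
  moreover have "\<forall>x\<in>S. (if x = s then 1 else 0) \<in> R"
    using assms(1) unfolding subring_def by auto
  ultimately show "s \<in> rspan R S"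
    unfolding rspan_def by (auto intro!: exI[of _ "\<lambda>x. if x = s then 1 else 0"])
qed

lemma rspan_eq_hull:
  assumes "subring R" "finite S"
  shows "rspan R S = submod R hull S"
proof
  show "submod R hull S \<subseteq> rspan R S"
    using rspan_superset[OF assms] rspan_submod[OF assms(1)] by (rule hull_minimal)
  show "rspan R S \<subseteq> submod R hull S"
  proof
    fix x assume "x \<in> rspan R S"
    then obtain a where x: "x = (\<Sum>s\<in>S. a s * s)" "\<forall>s\<in>S. a s \<in> R"
      unfolding rspan_def by blast
    have "\<forall>s\<in>S. a s * s \<in> submod R hull S"
      using x(2) submod_hull[of R S] hull_subset[of S] unfolding submod_def by blast
    then show "x \<in> submod R hull S"
      unfolding x(1) by (rule submod_sum[OF submod_hull assms(2)])
  qed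
qed

lemma rspan_one: "rspan R {1} = R"
  unfolding rspan_def by (auto intro: exI[of _ "\<lambda>_. _"])

lemma self_in_fgs:
  assumes "subring R"
  shows "R \<in> fgs R"
proof -
  have "R \<noteq> {0}"
    using self_in_Fbar[OF assms] unfolding Fbar_def by blast
  then show ?thesis
    unfolding fgs_def using rspan_one[of R] by (auto intro!: exI[of _ "{1}"])
qed

lemma fgsE:
  assumes "subring R" "H \<in> fgs R"
  obtains S where "finite S" "H = submod R hull S" "\<exists>s\<in>S. s \<noteq> 0"
proof -
  obtain S where S: "finite S" "H = rspan R S" "H \<noteq> {0}"
    using assms(2) unfolding fgs_def by blast
  then have H: "H = submod R hull S"
    using rspan_eq_hull[OF assms(1)] by blast
  then have "\<exists>s\<in>S. s \<noteq> 0"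
    using S(3) submod_hull hull_in_Fbar_iff unfolding Fbar_def by blast
  then show thesis
    using that S(1) H by blast
qed

lemma fgs_subset_Fbar: "subring R \<Longrightarrow> fgs R \<subseteq> Fbar R"
  by (metis fgsE hull_in_Fbar_iff subsetI)

definition prod_span :: "'k::field set \<Rightarrow> 'k set \<Rightarrow> 'k set \<Rightarrow> 'k set" where
  "prod_span R A B = submod R hull {a * b | a b. a \<in> A \<and> b \<in> B}"

lemma prod_span_commute: "prod_span R A B = prod_span R B A"
proof -
  have "{a * b | a b. a \<in> A \<and> b \<in> B} = {a * b | a b. a \<in> B \<and> b \<in> A}"
    by (auto; metis mult.commute)
  then show ?thesis
    unfolding prod_span_def by simp
qed

lemma prod_span_Fbar:
  assumes "\<exists>a\<in>A. a \<noteq> 0" "\<exists>b\<in>B. b \<noteq> 0"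
  shows "prod_span R A B \<in> Fbar R"
  unfolding prod_span_def hull_in_Fbar_iff using assms by force

lemma prod_span_mem: "a \<in> A \<Longrightarrow> b \<in> B \<Longrightarrow> a * b \<in> prod_span R A B"
  unfolding prod_span_def by (rule hull_inc) blast

lemma colon_prod_span:
  assumes "submod R Z"
  shows "colon Z (prod_span R A B) = {y. \<forall>a\<in>A. y * a \<in> colon Z B}"
  unfolding prod_span_def colon_hull[OF assms] by (auto simp: colon_def mult.assoc)

lemma prod_span_fgs:
  assumes "subring R" "finite A" "finite B" "\<exists>a\<in>A. a \<noteq> 0" "\<exists>b\<in>B. b \<noteq> 0"
  shows "prod_span R A B \<in> fgs R"
proof -
  let ?P = "{a * b | a b. a \<in> A \<and> b \<in> B}"
  have "finite ?P"
    using finite_image_set2[of "\<lambda>a. a \<in> A" "\<lambda>b. b \<in> B" "(\<lambda>a b. a * b)"] assms(2,3) by simp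
  moreover have "prod_span R A B \<noteq> {0}"
    using prod_span_Fbar[OF assms(4,5)] unfolding Fbar_def by blast
  ultimately show ?thesis
    unfolding fgs_def prod_span_def using rspan_eq_hull[OF assms(1)] by blast
qed

section \<open>Semistar operations\<close>

lemma
  assumes "semistar D st" "E \<in> Fbar D"
  shows semistar_Fbar: "st E \<in> Fbar D"
    and semistar_smul: "x \<noteq> 0 \<Longrightarrow> st (smul x E) = smul x (st E)"
    and semistar_mono: "F \<in> Fbar D \<Longrightarrow> E \<subseteq> F \<Longrightarrow> st E \<subseteq> st F"
    and semistar_extensive: "E \<subseteq> st E"
    and semistar_idem: "st (st E) = st E"
  using assms unfolding semistar_def by simp_all

lemma semistar_absorb:
  assumes "semistar D st" "X \<in> Fbar D" "Y \<in> Fbar D" "X \<subseteq> st Y"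
  shows "st X \<subseteq> st Y"
  using semistar_mono[OF assms(1,2) semistar_Fbar[OF assms(1,3)] assms(4)]
    semistar_idem[OF assms(1,3)] by simp

lemma semistar_colon_eq:
  assumes ss: "semistar D st" and E: "E \<in> Fbar D" and Y: "Y \<in> Fbar D"
  shows "colon (st Y) (st E) = colon (st Y) E"
proof
  show "colon (st Y) (st E) \<subseteq> colon (st Y) E"
    by (rule colon_antimono) (rule semistar_extensive[OF ss E])
  show "colon (st Y) E \<subseteq> colon (st Y) (st E)"
  proof
    fix x assume x: "x \<in> colon (st Y) E"
    show "x \<in> colon (st Y) (st E)"
    proof (cases "x = 0")
      case True
      then show ?thesis
        using Fbar_submod[OF semistar_Fbar[OF ss Y]] unfolding colon_def submod_def by simp
    next
      case False
      have "smul x E \<subseteq> st Y"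
        using x unfolding colon_def smul_def by blast
      then have "st (smul x E) \<subseteq> st Y"
        by (rule semistar_absorb[OF ss smul_Fbar[OF False E] Y])
      then have "smul x (st E) \<subseteq> st Y"
        using semistar_smul[OF ss E False] by simp
      then show ?thesis
        unfolding colon_def smul_def by blast
    qed
  qed
qed

lemma semistar_id: "semistar D (\<lambda>E. E)"
  unfolding semistar_def by simp

lemma star_subset_star_prod_span:
  assumes ss: "semistar D st" and sr: "subring D"
    and S: "\<exists>s\<in>S. s \<noteq> 0" "st (submod D hull S) = st D" and H: "H \<in> Fbar D"
  shows "st H \<subseteq> st (prod_span D S H)"
proof -
  let ?F = "submod D hull S" and ?P = "prod_span D S H"
  have F: "?F \<in> Fbar D"
    using hull_in_Fbar_iff S(1) by blast
  have P: "?P \<in> Fbar D"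
    by (rule prod_span_Fbar[OF S(1) Fbar_nonzero[OF H]])
  have "1 \<in> D"
    using sr unfolding subring_def by blast
  then have one: "1 \<in> st ?F"
    using S(2) semistar_extensive[OF ss self_in_Fbar[OF sr]] by auto
  have "H \<subseteq> st ?P"
  proof
    fix h assume h: "h \<in> H"
    have "s * h \<in> st ?P" if "s \<in> S" for s
      using prod_span_mem[OF that h] semistar_extensive[OF ss P] by blast
    then have "h \<in> colon (st ?P) S"
      unfolding colon_def by (simp add: mult.commute)
    then have "h \<in> colon (st ?P) (st ?F)"
      using semistar_colon_eq[OF ss F P] colon_hull[OF Fbar_submod[OF semistar_Fbar[OF ss P]]] by simp
    then have "h * 1 \<in> st ?P"
      using one unfolding colon_def by blast
    then show "h \<in> st ?P"
      by simp
  qed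
  then show ?thesis
    by (rule semistar_absorb[OF ss H P])
qed

lemma colon_star_prod_span_subset:
  assumes ss: "semistar D st" and sr: "subring D"
    and S: "\<exists>s\<in>S. s \<noteq> 0" "st (submod D hull S) = st D" and H: "H \<in> Fbar D"
  shows "colon (st H) (prod_span D S H) \<subseteq> colon (st H) (st H)"
proof -
  have P: "prod_span D S H \<in> Fbar D"
    by (rule prod_span_Fbar[OF S(1) Fbar_nonzero[OF H]])
  have "colon (st H) (prod_span D S H) = colon (st H) (st (prod_span D S H))"
    using semistar_colon_eq[OF ss P H] by simp
  also have "\<dots> \<subseteq> colon (st H) (st H)"
    by (rule colon_antimono) (rule star_subset_star_prod_span[OF assms])
  finally show ?thesis .
qed

lemma colon_star_subset_colon_star_prod_span:
  assumes ss: "semistar D st" and A: "\<exists>a\<in>A. a \<noteq> 0" and B: "\<exists>b\<in>B. b \<noteq> 0"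
  shows "colon (st (submod D hull A)) (st (submod D hull A))
    \<subseteq> colon (st (prod_span D A B)) (st (prod_span D A B))"
proof
  let ?X = "submod D hull A" and ?P = "prod_span D A B"
  have X: "?X \<in> Fbar D"
    using hull_in_Fbar_iff A by blast
  have P: "?P \<in> Fbar D"
    by (rule prod_span_Fbar[OF A B])
  have stP: "submod D (st ?P)"
    using Fbar_submod[OF semistar_Fbar[OF ss P]] .
  fix x assume x: "x \<in> colon (st ?X) (st ?X)"
  have "b \<in> colon (st ?P) (st ?X)" if "b \<in> B" for b
  proof -
    have "a * b \<in> st ?P" if "a \<in> A" for a
      using prod_span_mem[OF that \<open>b \<in> B\<close>] semistar_extensive[OF ss P] by blast
    then have "b \<in> colon (st ?P) A"
      unfolding colon_def by (simp add: mult.commute)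
    then show ?thesis
      using semistar_colon_eq[OF ss X P] colon_hull[OF stP] by simp
  qed
  moreover have "x * a \<in> st ?X" if "a \<in> A" for a
    using x semistar_extensive[OF ss X] hull_subset[of A] that unfolding colon_def by blast
  ultimately have "x \<in> colon (st ?P) ?P"
    unfolding colon_prod_span[OF stP] by (auto simp: colon_def mult.commute)
  then show "x \<in> colon (st ?P) (st ?P)"
    using semistar_colon_eq[OF ss P P] by simp
qed

lemma fractional_ideal_self:
  assumes "subring D"
  shows "fractional_ideal D D"
  using self_in_Fbar[OF assms] assms unfolding fractional_ideal_def subring_def by force

lemma fractional_ideal_prod_span:
  assumes sr: "subring D" and "fractional_ideal D E1" "fractional_ideal D E2"
  shows "fractional_ideal D (prod_span D E1 E2)"
proof -
  obtain d1 d2 where d: "d1 \<in> D" "d1 \<noteq> 0" "\<forall>e\<in>E1. d1 * e \<in> D" "d2 \<in> D" "d2 \<noteq> 0" "\<forall>e\<in>E2. d2 * e \<in> D"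
    and E: "E1 \<in> Fbar D" "E2 \<in> Fbar D"
    using assms(2,3) unfolding fractional_ideal_def by blast
  have "d1 * d2 \<in> colon D (prod_span D E1 E2)"
  proof -
    have "(d1 * a) * (d2 * b) \<in> D" if "a \<in> E1" "b \<in> E2" for a b
      using d that sr unfolding subring_def by blast
    then show ?thesis
      unfolding colon_prod_span[OF subring_submod[OF sr]] by (auto simp: colon_def ac_simps)
  qed
  moreover have "d1 * d2 \<in> D" "d1 * d2 \<noteq> 0"
    using d sr unfolding subring_def by auto
  moreover have "prod_span D E1 E2 \<in> Fbar D"
    by (rule prod_span_Fbar[OF Fbar_nonzero Fbar_nonzero]) (fact E)+
  ultimately show ?thesis
    unfolding fractional_ideal_def colon_def by blast
qed

lemma fractional_ideal_star:
  assumes ss: "semistar D st" and sr: "subring D" and conductor: "colon D (st D) \<noteq> {0}"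
    and E: "fractional_ideal D E"
  shows "fractional_ideal D (st E)"
proof -
  obtain d where d: "d \<in> D" "d \<noteq> 0" "d \<in> colon D E" and EF: "E \<in> Fbar D"
    using E unfolding fractional_ideal_def colon_def by blast
  have DF: "D \<in> Fbar D"
    using self_in_Fbar[OF sr] .
  have "0 \<in> colon D (st D)"
    using sr unfolding colon_def subring_def by simp
  then obtain c where c: "c \<in> colon D (st D)" "c \<noteq> 0"
    using conductor by blast
  have "d \<in> colon (st D) (st E)"
    using d(3) colon_mono[OF semistar_extensive[OF ss DF]] semistar_colon_eq[OF ss EF DF] by blast
  then have "c * d \<in> colon D (st E)"
    using c(1) unfolding colon_def by (simp add: mult.assoc)
  moreover have "c * d \<in> D"
    using c(1) d(1) semistar_extensive[OF ss DF] unfolding colon_def by blast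
  ultimately show ?thesis
    unfolding fractional_ideal_def colon_def using semistar_Fbar[OF ss EF] c(2) d(2)
    by (auto intro!: bexI[of _ "c * d"])
qed

section \<open>Directed unions of the rings (X : X)\<close>

definition colon_directed :: "'k::field set set \<Rightarrow> bool" where
  "colon_directed \<X> \<longleftrightarrow> \<X> \<noteq> {} \<and> (\<forall>X\<in>\<X>. \<forall>Y\<in>\<X>. \<exists>Z\<in>\<X>. colon X X \<union> colon Y Y \<subseteq> colon Z Z)"

lemma finite_subset_colon_Union:
  assumes dir: "colon_directed \<X>" and "finite A" "A \<subseteq> (\<Union>X\<in>\<X>. colon X X)"
  shows "\<exists>X\<in>\<X>. A \<subseteq> colon X X"
  using assms(2,3)
proof (induction A rule: finite_induct)
  case empty
  then show ?case
    using dir unfolding colon_directed_def by blast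
next
  case (insert a A)
  then obtain X Y where "X \<in> \<X>" "a \<in> colon X X" "Y \<in> \<X>" "A \<subseteq> colon Y Y"
    by auto
  moreover obtain Z where "Z \<in> \<X>" "colon X X \<union> colon Y Y \<subseteq> colon Z Z"
    using dir calculation(1,3) unfolding colon_directed_def by blast
  ultimately show ?case
    by blast
qed

lemma subring_colon_Union:
  assumes sr: "subring D" and dir: "colon_directed \<X>" and sub: "\<forall>X\<in>\<X>. submod D X"
  shows "subring (\<Union>X\<in>\<X>. colon X X)" and "D \<subseteq> (\<Union>X\<in>\<X>. colon X X)"
proof -
  have ring: "subring (colon X X)" if "X \<in> \<X>" for X
    using subring_colon_self(1)[OF sr] sub that by blast
  obtain X0 where X0: "X0 \<in> \<X>"
    using dir unfolding colon_directed_def by blast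
  show "D \<subseteq> (\<Union>X\<in>\<X>. colon X X)"
    using subring_colon_self(2)[OF sr] sub X0 by blast
  show "subring (\<Union>X\<in>\<X>. colon X X)"
    unfolding subring_def
  proof (intro conjI ballI)
    show "0 \<in> (\<Union>X\<in>\<X>. colon X X)" "1 \<in> (\<Union>X\<in>\<X>. colon X X)"
      using ring[OF X0] X0 unfolding subring_def by blast+
    fix x y assume "x \<in> (\<Union>X\<in>\<X>. colon X X)" "y \<in> (\<Union>X\<in>\<X>. colon X X)"
    then obtain X where X: "X \<in> \<X>" "x \<in> colon X X" "y \<in> colon X X"
      using finite_subset_colon_Union[OF dir, of "{x, y}"] by auto
    then show "x + y \<in> (\<Union>X\<in>\<X>. colon X X)" "x - y \<in> (\<Union>X\<in>\<X>. colon X X)"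
      "x * y \<in> (\<Union>X\<in>\<X>. colon X X)"
      using ring[OF X(1)] unfolding subring_def by blast+
  qed
qed

section \<open>The t-operation and linked overrings\<close>

lemma v_op_subset:
  assumes "G \<subseteq> T"
  shows "v_op T G \<subseteq> T"
proof
  fix x assume "x \<in> v_op T G"
  moreover have "1 \<in> colon T G"
    using assms unfolding colon_def by auto
  ultimately have "x * 1 \<in> T"
    unfolding v_op_def colon_def by blast
  then show "x \<in> T" by simp
qed

lemma t_op_subset: "E \<subseteq> T \<Longrightarrow> t_op T E \<subseteq> T"
  unfolding t_op_def finite_type_def using v_op_subset by blast

lemma subset_v_op:
  assumes "subring T" "colon T G \<subseteq> T"
  shows "T \<subseteq> v_op T G"
  using assms unfolding v_op_def colon_def subring_def by blast

lemma t_op_self: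
  assumes "subring T"
  shows "t_op T T = T"
proof
  show "t_op T T \<subseteq> T"
    by (rule t_op_subset) simp
  have "T \<subseteq> v_op T T"
    by (rule subset_v_op[OF assms]) (simp add: colon_subring_eq[OF assms])
  then show "T \<subseteq> t_op T T"
    unfolding t_op_def finite_type_def using self_in_fgs[OF assms] by blast
qed

lemma prod_ext_subset:
  assumes "subring T" "F \<subseteq> T"
  shows "prod_ext F T \<subseteq> T"
proof
  fix x assume "x \<in> prod_ext F T"
  then obtain n :: nat and f t where x: "x = (\<Sum>i<n. f i * t i)" "\<forall>i<n. f i \<in> F \<and> t i \<in> T"
    unfolding prod_ext_def by blast
  have "\<forall>i\<in>{..<n}. f i * t i \<in> T"
    using x(2) assms unfolding subring_def by blast
  then show "x \<in> T"
    unfolding x(1) by (rule submod_sum[OF subring_submod[OF assms(1)] finite_lessThan])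
qed

lemma rspan_subset_prod_ext:
  assumes "finite S" "S \<subseteq> F"
  shows "rspan T S \<subseteq> prod_ext F T"
proof
  fix x assume "x \<in> rspan T S"
  then obtain a where a: "x = (\<Sum>s\<in>S. a s * s)" "\<forall>s\<in>S. a s \<in> T"
    unfolding rspan_def by blast
  obtain h where h: "bij_betw h {..<card S} S"
    using ex_bij_betw_nat_finite[OF assms(1)] atLeast0LessThan by auto
  have "x = (\<Sum>i<card S. h i * a (h i))"
    using sum.reindex_bij_betw[OF h, of "\<lambda>s. a s * s"] a(1) by (simp add: mult.commute)
  moreover have "\<forall>i<card S. h i \<in> F \<and> a (h i) \<in> T"
    using h a(2) assms(2) unfolding bij_betw_def by auto
  ultimately show "x \<in> prod_ext F T"
    unfolding prod_ext_def mem_Collect_eq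
    by (intro exI[of _ "card S"] exI[of _ h] exI[of _ "\<lambda>i. a (h i)"]) simp
qed

lemma t_op_prod_ext_eq:
  assumes T: "subring T" and "F \<subseteq> T" and S: "finite S" "S \<subseteq> F" "\<exists>s\<in>S. s \<noteq> 0"
    and colon: "colon T S \<subseteq> T"
  shows "t_op T (prod_ext F T) = t_op T T"
proof -
  let ?G = "rspan T S"
  have "S \<subseteq> ?G"
    by (rule rspan_superset[OF T S(1)])
  then have "?G \<in> fgs T"
    unfolding fgs_def using S by blast
  moreover have "?G \<subseteq> prod_ext F T"
    by (rule rspan_subset_prod_ext[OF S(1,2)])
  moreover have "T \<subseteq> v_op T ?G"
    using subset_v_op[OF T] colon_antimono[OF \<open>S \<subseteq> ?G\<close>] colon by blast
  ultimately have "T \<subseteq> t_op T (prod_ext F T)"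
    unfolding t_op_def finite_type_def by blast
  then show ?thesis
    using t_op_subset[OF prod_ext_subset[OF T \<open>F \<subseteq> T\<close>]] t_op_self[OF T] by blast
qed

lemma linked_if_colon_subset:
  assumes sr: "subring D" and T: "subring T" "D \<subseteq> T"
    and colon: "\<And>S. finite S \<Longrightarrow> \<exists>s\<in>S. s \<noteq> 0 \<Longrightarrow> st (submod D hull S) = st D \<Longrightarrow> colon T S \<subseteq> T"
  shows "linked D st T (t_op T)"
  unfolding linked_def
proof (intro allI impI, elim conjE)
  fix F assume F: "F \<in> fgs D" "F \<subseteq> D" "st F = st D"
  then obtain S where S: "finite S" "F = submod D hull S" "\<exists>s\<in>S. s \<noteq> 0"
    using fgsE[OF sr] by blast
  have "S \<subseteq> F" "F \<subseteq> T"
    using S(2) hull_subset[of S] F(2) T(2) by blast+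
  moreover have "colon T S \<subseteq> T"
    using colon[OF S(1,3)] F(3) S(2) by simp
  ultimately show "t_op T (prod_ext F T) = t_op T T"
    using t_op_prod_ext_eq[OF T(1) _ S(1) _ S(3)] by blast
qed

lemma t_linked_star_colon_Union:
  assumes ss: "semistar D st" and sr: "subring D" and dir: "colon_directed \<X>"
    and Fbar: "\<X> \<subseteq> Fbar D" and closed: "\<And>X. X \<in> \<X> \<Longrightarrow> st X \<in> \<X>"
  shows "t_linked_star D st (\<Union>X\<in>\<X>. colon X X)"
proof -
  let ?T = "\<Union>X\<in>\<X>. colon X X"
  have sub: "\<forall>X\<in>\<X>. submod D X"
    using Fbar Fbar_submod by blast
  show ?thesis
    unfolding t_linked_star_def
  proof (rule linked_if_colon_subset[OF sr subring_colon_Union[OF sr dir sub]])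
    fix S assume S: "finite S" "\<exists>s\<in>S. s \<noteq> 0" "st (submod D hull S) = st D"
    show "colon ?T S \<subseteq> ?T"
    proof
      fix y assume "y \<in> colon ?T S"
      then have "(\<lambda>s. y * s) ` S \<subseteq> ?T"
        unfolding colon_def by blast
      then obtain X where X: "X \<in> \<X>" "(\<lambda>s. y * s) ` S \<subseteq> colon X X"
        using finite_subset_colon_Union[OF dir finite_imageI[OF S(1)]] by blast
      have XF: "X \<in> Fbar D"
        using X(1) Fbar by blast
      have "colon X X \<subseteq> colon (st X) X"
        by (rule colon_mono[OF semistar_extensive[OF ss XF]])
      then have "\<forall>a\<in>S. y * a \<in> colon (st X) X"
        using X(2) by blast
      then have "y \<in> colon (st X) (prod_span D S X)"
        unfolding colon_prod_span[OF Fbar_submod[OF semistar_Fbar[OF ss XF]]] by blast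
      then have "y \<in> colon (st X) (st X)"
        using colon_star_prod_span_subset[OF ss sr S(2,3) XF] by blast
      then show "y \<in> ?T"
        using closed[OF X(1)] by blast
    qed
  qed
qed

lemma colon_directed_star_fgs:
  assumes ss: "semistar D st" and sr: "subring D"
  shows "colon_directed (st ` fgs D)"
proof -
  have "\<exists>Z\<in>st ` fgs D. colon (st H1) (st H1) \<union> colon (st H2) (st H2) \<subseteq> colon Z Z"
    if H: "H1 \<in> fgs D" "H2 \<in> fgs D" for H1 H2
  proof -
    obtain S1 where S1: "finite S1" "H1 = submod D hull S1" "\<exists>s\<in>S1. s \<noteq> 0"
      using fgsE[OF sr H(1)] by blast
    obtain S2 where S2: "finite S2" "H2 = submod D hull S2" "\<exists>s\<in>S2. s \<noteq> 0"
      using fgsE[OF sr H(2)] by blast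
    let ?P = "prod_span D S1 S2"
    have "?P \<in> fgs D"
      by (rule prod_span_fgs[OF sr S1(1) S2(1) S1(3) S2(3)])
    moreover have "colon (st H1) (st H1) \<subseteq> colon (st ?P) (st ?P)"
      using colon_star_subset_colon_star_prod_span[OF ss S1(3) S2(3)] S1(2) by simp
    moreover have "colon (st H2) (st H2) \<subseteq> colon (st ?P) (st ?P)"
      using colon_star_subset_colon_star_prod_span[OF ss S2(3) S1(3)] S2(2)
      by (simp add: prod_span_commute[of D S2 S1])
    ultimately show ?thesis
      by blast
  qed
  moreover have "st ` fgs D \<noteq> {}"
    using self_in_fgs[OF sr] by blast
  ultimately show ?thesis
    unfolding colon_directed_def by blast
qed

lemma colon_directed_fractional_ideals:
  assumes sr: "subring D"
  shows "colon_directed {E. fractional_ideal D E}"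
proof -
  \<comment> \<open>the identity is a semistar operation, so the directedness lemma for D^[st] applies\<close>
  have grow: "colon E1 E1 \<subseteq> colon (prod_span D E1 E2) (prod_span D E1 E2)"
    if "fractional_ideal D E1" "fractional_ideal D E2" for E1 E2
  proof -
    have E: "E1 \<in> Fbar D" "E2 \<in> Fbar D"
      using that unfolding fractional_ideal_def by blast+
    have "submod D hull E1 = E1"
      using hull_same[of "submod D" E1] Fbar_submod[OF E(1)] by blast
    then show ?thesis
      using colon_star_subset_colon_star_prod_span[OF semistar_id[of D] Fbar_nonzero Fbar_nonzero, OF E]
      by simp
  qed
  have "\<exists>Z\<in>{E. fractional_ideal D E}. colon E1 E1 \<union> colon E2 E2 \<subseteq> colon Z Z"
    if E: "fractional_ideal D E1" "fractional_ideal D E2" for E1 E2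
  proof -
    have "colon E2 E2 \<subseteq> colon (prod_span D E1 E2) (prod_span D E1 E2)"
      using grow[OF E(2,1)] by (simp add: prod_span_commute[of D E2 E1])
    then show ?thesis
      using grow[OF E] fractional_ideal_prod_span[OF sr E] by blast
  qed
  then show ?thesis
    unfolding colon_directed_def using fractional_ideal_self[OF sr] by blast
qed

theorem t_linked_star_Dbracket:
  assumes sr: "subring D" and ss: "semistar D st"
  shows "t_linked_star D st (Dbracket D st)"
proof -
  have "Dbracket D st = (\<Union>X\<in>st ` fgs D. colon X X)"
    unfolding Dbracket_def by blast
  moreover have "st ` fgs D \<subseteq> Fbar D"
    using fgs_subset_Fbar[OF sr] semistar_Fbar[OF ss] by blast
  moreover have "st X \<in> st ` fgs D" if "X \<in> st ` fgs D" for X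
    using that fgs_subset_Fbar[OF sr] semistar_idem[OF ss] by force
  ultimately show ?thesis
    using t_linked_star_colon_Union[OF ss sr colon_directed_star_fgs[OF ss sr]] by simp
qed

theorem t_linked_star_cic:
  assumes sr: "subring D" and ss: "semistar D st" and conductor: "colon D (st D) \<noteq> {0}"
  shows "t_linked_star D st (cic D)"
proof -
  have "cic D = (\<Union>E\<in>{E. fractional_ideal D E}. colon E E)"
    unfolding cic_def by blast
  moreover have "{E. fractional_ideal D E} \<subseteq> Fbar D"
    unfolding fractional_ideal_def by blast
  ultimately show ?thesis
    using t_linked_star_colon_Union[OF ss sr colon_directed_fractional_ideals[OF sr]]
      fractional_ideal_star[OF ss sr conductor] by simp
qed

section \<open>The v-operation\<close>

lemma v_op_self: "subring D \<Longrightarrow> v_op D D = D"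
  unfolding v_op_def by (simp add: colon_subring_eq)

lemma semistar_v_op:
  assumes sr: "subring D"
  shows "semistar D (v_op D)"
proof -
  have closed: "v_op D E \<in> Fbar D" if "E \<in> Fbar D" for E
  proof -
    have "submod D (v_op D E)"
      unfolding v_op_def by (rule submod_colon[OF subring_submod[OF sr]])
    moreover have "v_op D E \<noteq> {0}"
      using Fbar_nonzero[OF that] subset_colon_colon[of E D] unfolding v_op_def by blast
    ultimately show ?thesis
      unfolding Fbar_def by blast
  qed
  have smul: "v_op D (smul x E) = smul x (v_op D E)" if "x \<noteq> 0" for x E
    using that unfolding v_op_def by (simp add: colon_smul)
  have mono: "v_op D E \<subseteq> v_op D F" if "E \<subseteq> F" for E F
    unfolding v_op_def by (intro colon_antimono that)
  have extensive: "E \<subseteq> v_op D E" and idem: "v_op D (v_op D E) = v_op D E" for E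
    unfolding v_op_def by (simp_all add: subset_colon_colon colon_colon_colon)
  show ?thesis
    unfolding semistar_def by (simp add: closed smul mono extensive idem)
qed

lemma t_op_subset_v_op: "t_op T E \<subseteq> v_op T E"
proof
  fix x assume "x \<in> t_op T E"
  then obtain G where "G \<subseteq> E" "x \<in> v_op T G"
    unfolding t_op_def finite_type_def by blast
  then show "x \<in> v_op T E"
    unfolding v_op_def using colon_antimono[OF colon_antimono] by blast
qed

lemma t_linked_if_t_linked_star_v_op:
  assumes sr: "subring D" and linked: "t_linked_star D (v_op D) T"
  shows "t_linked D T"
  unfolding t_linked_def linked_def
proof (intro allI impI, elim conjE)
  fix F assume F: "F \<in> fgs D" "F \<subseteq> D" "t_op D F = t_op D D"
  have "v_op D F = v_op D D"
  proof
    show "v_op D F \<subseteq> v_op D D"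
      unfolding v_op_def by (intro colon_antimono F(2))
    have "D = t_op D F"
      using F(3) t_op_self[OF sr] by simp
    then show "v_op D D \<subseteq> v_op D F"
      using t_op_subset_v_op[of D F] v_op_self[OF sr] by simp
  qed
  then show "t_op T (prod_ext F T) = t_op T T"
    using linked F(1,2) unfolding t_linked_star_def linked_def by blast
qed

theorem corollary3p6:
  fixes D :: "'k::field set" and st :: "'k set \<Rightarrow> 'k set"
  assumes "subring D" and "quotient_field_is_UNIV D" and "semistar D st"
  shows "t_linked_star D st (Dbracket D st)
    \<and> (colon D (st D) \<noteq> {0} \<longrightarrow> t_linked_star D st (cic D))
    \<and> t_linked D (cic D)"
proof -
  have "1 \<in> colon D (v_op D D)"
    using assms(1) unfolding v_op_self[OF assms(1)] colon_def subring_def by simp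
  then have "colon D (v_op D D) \<noteq> {0}"
    by auto
  then have "t_linked D (cic D)"
    using t_linked_star_cic[OF assms(1) semistar_v_op[OF assms(1)]]
      t_linked_if_t_linked_star_v_op[OF assms(1)] by blast
  then show ?thesis
    using t_linked_star_Dbracket[OF assms(1,3)] t_linked_star_cic[OF assms(1,3)] by blast
qed

end
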